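(* Assume the setup (S) of the context. Let $\phi\colon H\oplus H^*\to\bigwedge^{\mathrm{even}}H$ be the map $x\mapsto x\cdot s$, and let $\phi^*\colon(\bigwedge^{\mathrm{even}}H)^*\to (H\oplus H^* )^*\cong H\oplus H^*$ be its dual (identification via $\beta$). Then $\operatorname{im}\phi^*\subseteq\operatorname{im}\delta_3$. In particular, the element $(s_1,0)\in H\oplus H^*$ lies in $\operatorname{im}\delta_3$, so there exists $u\in B_1^*$ with $\delta_3(u)=(s_1,0)$.
   Context: Setup (S): $R$ is a Noetherian unique factorization domain with $1/2\in R$; $p\ge1$, $q\ge3$, $n=p+2$; $B_0=R^{q-2}$, $B_1=R^{p+q}$, $H=R^n$. On $H\oplus H^*$ let $Q(f,f')=f'(f)$ and $\beta\big((f,f'),(g,g')\big)=f'(g)+g'(f)$, which identifies $(H\oplus H^* )^*$ with $H\oplus H^*$. Let $\mathbb{B}\colon 0\to B_0^*\xrightarrow{\delta_4}B_1^*\xrightarrow{\delta_3}H\oplus H^*\xrightarrow{\delta_2}B_1\xrightarrow{\delta_1}B_0$ be an acyclic complex with $\delta_2=\delta_3^*$ and $\delta_1=\delta_4^*$ (duals taken using $\beta$). The Clifford action of $H\oplus H^*$ on $\bigwedge H$ is $(f,f')\cdot\omega=f\wedge\omega+\iota_{f'}(\omega)$, where $\iota_{f'}(e_1\wedge\cdots\wedge e_j)=\sum_i(-1)^{i-1}f'(e_i)\,e_1\wedge\cdots\widehat{e_i}\cdots\wedge e_j$. Let $s\in\bigwedge^{\mathrm{odd}}H$ (the spinor coordinates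 of $\mathbb{B}$) be an element such that for every prime $\mathfrak p\notin\operatorname{Supp}H_0(\mathbb{B})$, the image of $s$ generates the $R_{\mathfrak p}$-module $\{\omega\in\bigwedge H_{\mathfrak p}: x\cdot\omega=0\ \forall x\in(\operatorname{im}\delta_3)_{\mathfrak p}\}$ (this encodes that $\operatorname{im}\delta_3$ and $H^*$ lie in different families of maximal isotropic subspaces). Let $s_1\in H$ be the degree-one component of $s$. *)

theory Defs
  imports "HOL-Computational_Algebra.Factorial_Ring" "Jordan_Normal_Form.Matrix"
begin

definition is_ideal :: "'a::comm_ring_1 set \<Rightarrow> bool" where
  "is_ideal I \<longleftrightarrow> 0 \<in> I \<and> (\<forall>a\<in>I. \<forall>b\<in>I. a + b \<in> I) \<and> (\<forall>r. \<forall>a\<in>I. r * a \<in> I)"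

definition is_prime_ideal :: "'a::comm_ring_1 set \<Rightarrow> bool" where
  "is_prime_ideal P \<longleftrightarrow> is_ideal P \<and> 1 \<notin> P \<and> (\<forall>a b. a * b \<in> P \<longrightarrow> a \<in> P \<or> b \<in> P)"

definition noetherian_ring :: "'a::comm_ring_1 itself \<Rightarrow> bool" where
  "noetherian_ring _ \<longleftrightarrow> (\<forall>I::'a set. is_ideal I \<longrightarrow>
      (\<exists>F. finite F \<and> F \<subseteq> I \<and> I = {\<Sum>f\<in>F. c f * f | c. True}))"

text \<open>Elements of H + H^* (H = R^n) are vectors of dimension 2n: coordinates
  0..n-1 are the H-part (standard basis e_i), coordinates n..2n-1 are the
  H^*-part (dual basis e_i^*).\<close>

definition beta :: "nat \<Rightarrow> 'a::comm_ring_1 vec \<Rightarrow> 'a vec \<Rightarrow> 'a" where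
  "beta n x y = (\<Sum>i<n. x $ (n + i) * y $ i + y $ (n + i) * x $ i)"

text \<open>Gram matrix of beta; used to take duals with respect to beta.\<close>
definition Jmat :: "nat \<Rightarrow> 'a::comm_ring_1 mat" where
  "Jmat n = mat (2 * n) (2 * n) (\<lambda>(i, j). if j = i + n \<or> i = j + n then 1 else 0)"

definition exact_at :: "nat \<Rightarrow> 'a::comm_ring_1 mat \<Rightarrow> 'a mat \<Rightarrow> bool" where
  "exact_at m A B \<longleftrightarrow> (\<forall>v\<in>carrier_vec m. A *\<^sub>v v = 0\<^sub>v (dim_row A) \<longrightarrow>
      (\<exists>w\<in>carrier_vec (dim_col B). B *\<^sub>v w = v))"

text \<open>An element of the exterior algebra is given by its coordinates with respect
  to the basis e_S = e_{i1} wedge ... wedge e_{ik} (i1 < ... < ik, S = {i1,..,ik} \<subseteq> {0..<n}).\<close>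

definition ext :: "nat \<Rightarrow> (nat set \<Rightarrow> 'a::zero) set" where
  "ext n = {\<omega>. \<forall>S. \<not> S \<subseteq> {..<n} \<longrightarrow> \<omega> S = 0}"

definition ext_odd :: "nat \<Rightarrow> (nat set \<Rightarrow> 'a::zero) set" where
  "ext_odd n = {\<omega>\<in>ext n. \<forall>S. even (card S) \<longrightarrow> \<omega> S = 0}"

definition ext_even :: "nat \<Rightarrow> (nat set \<Rightarrow> 'a::zero) set" where
  "ext_even n = {\<omega>\<in>ext n. \<forall>S. odd (card S) \<longrightarrow> \<omega> S = 0}"

definition ext_smult :: "'a::times \<Rightarrow> (nat set \<Rightarrow> 'a) \<Rightarrow> nat set \<Rightarrow> 'a" where
  "ext_smult r \<omega> = (\<lambda>S. r * \<omega> S)"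

text \<open>f wedge omega, for f in H given by coordinates f i (i < n).\<close>
definition wedge1 :: "nat \<Rightarrow> (nat \<Rightarrow> 'a::comm_ring_1) \<Rightarrow> (nat set \<Rightarrow> 'a) \<Rightarrow> nat set \<Rightarrow> 'a" where
  "wedge1 n f \<omega> = (\<lambda>S. if S \<subseteq> {..<n} then
      (\<Sum>i\<in>S. (-1) ^ card {j\<in>S. j < i} * f i * \<omega> (S - {i})) else 0)"

text \<open>Contraction iota_{f'}(omega), for f' in H^* given by coordinates f' i (i < n)
  w.r.t. the dual basis; iota(e_T) = sum over i in T of (-1)^(position of i in T - 1) f'(e_i) e_(T-{i}).\<close>
definition contr :: "nat \<Rightarrow> (nat \<Rightarrow> 'a::comm_ring_1) \<Rightarrow> (nat set \<Rightarrow> 'a) \<Rightarrow> nat set \<Rightarrow> 'a" where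
  "contr n f' \<omega> = (\<lambda>S. if S \<subseteq> {..<n} then
      (\<Sum>i\<in>{..<n} - S. (-1) ^ card {j\<in>S. j < i} * f' i * \<omega> (insert i S)) else 0)"

definition clifford :: "nat \<Rightarrow> 'a::comm_ring_1 vec \<Rightarrow> (nat set \<Rightarrow> 'a) \<Rightarrow> nat set \<Rightarrow> 'a" where
  "clifford n x \<omega> = (\<lambda>S. wedge1 n (\<lambda>i. x $ i) \<omega> S + contr n (\<lambda>i. x $ (n + i)) \<omega> S)"

text \<open>P is not in Supp H_0(B), where H_0(B) = coker(d1 : R^(p+q) -> R^(q-2)):
  (coker d1)_P = 0, i.e. every y/1 vanishes in the localization.\<close>
definition not_in_supp_coker :: "'a::comm_ring_1 set \<Rightarrow> nat \<Rightarrow> 'a mat \<Rightarrow> bool" where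
  "not_in_supp_coker P m d1 \<longleftrightarrow> (\<forall>y\<in>carrier_vec m. \<exists>u. u \<notin> P \<and>
      (\<exists>z\<in>carrier_vec (dim_col d1). d1 *\<^sub>v z = u \<cdot>\<^sub>v y))"

text \<open>omega/t in (wedge H)_P is annihilated by every x in (im d3)_P,
  i.e. for each b, (d3 b) . omega vanishes in (wedge H)_P (independent of denominators).\<close>
definition loc_annihilated :: "'a::comm_ring_1 set \<Rightarrow> nat \<Rightarrow> 'a mat \<Rightarrow> (nat set \<Rightarrow> 'a) \<Rightarrow> bool" where
  "loc_annihilated P n d3 \<omega> \<longleftrightarrow> (\<forall>b\<in>carrier_vec (dim_col d3). \<exists>u. u \<notin> P \<and>
      ext_smult u (clifford n (d3 *\<^sub>v b) \<omega>) = (\<lambda>S. 0))"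

text \<open>The image s/1 of s generates the R_P-module
  {omega in (wedge H)_P : x . omega = 0 for all x in (im d3)_P}.\<close>
definition loc_generates_annihilator :: "'a::comm_ring_1 set \<Rightarrow> nat \<Rightarrow> 'a mat \<Rightarrow> (nat set \<Rightarrow> 'a) \<Rightarrow> bool" where
  "loc_generates_annihilator P n d3 s \<longleftrightarrow>
     loc_annihilated P n d3 s \<and>
     (\<forall>\<omega>\<in>ext n. \<forall>t. t \<notin> P \<longrightarrow> loc_annihilated P n d3 \<omega> \<longrightarrow>
        (\<exists>r t'. t' \<notin> P \<and> (\<exists>u. u \<notin> P \<and>
           ext_smult u (\<lambda>S. t' * \<omega> S - t * r * s S) = (\<lambda>S. 0))))"

definition even_functional :: "nat \<Rightarrow> ((nat set \<Rightarrow> 'a::comm_ring_1) \<Rightarrow> 'a) \<Rightarrow> bool" where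
  "even_functional n lam \<longleftrightarrow>
     (\<forall>\<omega>\<in>ext_even n. \<forall>\<eta>\<in>ext_even n. lam (\<lambda>S. \<omega> S + \<eta> S) = lam \<omega> + lam \<eta>) \<and>
     (\<forall>r. \<forall>\<omega>\<in>ext_even n. lam (ext_smult r \<omega>) = r * lam \<omega>)"

text \<open>phi x = x . s ; phi^*(lambda) is the element y of H + H^* with
  beta y x = lambda (phi x) for all x (identification (H + H^*)^* = H + H^* via beta).\<close>
definition phi_dual :: "nat \<Rightarrow> (nat set \<Rightarrow> 'a::comm_ring_1) \<Rightarrow> ((nat set \<Rightarrow> 'a) \<Rightarrow> 'a) \<Rightarrow> 'a vec" where
  "phi_dual n s lam = (THE y. y \<in> carrier_vec (2 * n) \<and>
      (\<forall>x\<in>carrier_vec (2 * n). beta n y x = lam (clifford n x s)))"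

end

theory Submission
  imports Defs "Jordan_Normal_Form.Determinant" "Jordan_Normal_Form.Gauss_Jordan_Elimination"
begin

(* Since d4 is injective, coker d1 = coker d4^T is torsion, so the generic point (0) lies outside
   Supp H_0(B); localising there shows that every element of im d3 annihilates s, i.e. phi vanishes
   on im d3.  For a functional lam this gives beta (phi^* lam, d3 b) = lam (phi (d3 b)) = 0 for all b,
   that is d2 (phi^* lam) = d3^T J (phi^* lam) = 0, and exactness at H + H^* puts phi^* lam into
   im d3.  The functional "coefficient of 1" has phi^*-image (s_1, 0), because the coefficient of 1
   in (f, f') . s is f'(s_1). *)

section \<open>Linear algebra over a domain via its fraction field\<close>

lemma pivot_fun_mult_vec_surj:
  fixes C :: "'a::comm_ring_1 mat"
  assumes C: "C \<in> carrier_mat nr nc" and pivot: "pivot_fun C f nc"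
    and no_zero_row: "\<And>i. i < nr \<Longrightarrow> row C i \<noteq> 0\<^sub>v nc"
    and y: "y \<in> carrier_vec nr"
  shows "\<exists>z\<in>carrier_vec nc. C *\<^sub>v z = y"
proof -
  have dim: "dim_row C = nr" using C by auto
  note pD = pivot_funD[OF dim pivot]
  have f_less: "f i < nc" if "i < nr" for i
    using pD(1)[OF that] pivot_fun_zero_row_iff[OF pivot C that] no_zero_row[OF that] by auto
  define z where "z = vec nc (\<lambda>j. \<Sum>i<nr. if f i = j then y $ i else 0)"
  have "(C *\<^sub>v z) $ i' = y $ i'" if i': "i' < nr" for i'
  proof -
    have "(C *\<^sub>v z) $ i' = (\<Sum>j<nc. \<Sum>i<nr. if f i = j then C $$ (i', f i) * y $ i else 0)"
      using C i' unfolding z_def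
      by (auto simp: scalar_prod_def lessThan_atLeast0 sum_distrib_left intro!: sum.cong)
    also have "\<dots> = (\<Sum>i<nr. \<Sum>j<nc. if f i = j then C $$ (i', f i) * y $ i else 0)"
      by (rule sum.swap)
    also have "\<dots> = (\<Sum>i<nr. if i = i' then y $ i else 0)"
      using f_less pD(4,5) i' by (intro sum.cong) auto
    finally show ?thesis using i' by simp
  qed
  then have "C *\<^sub>v z = y" using C y by (intro eq_vecI) auto
  then show ?thesis unfolding z_def by auto
qed

lemma mult_vec_surj_of_transpose_inj:
  fixes B :: "'a::field mat"
  assumes B: "B \<in> carrier_mat nr nc"
    and inj: "\<And>w. w \<in> carrier_vec nr \<Longrightarrow> transpose_mat B *\<^sub>v w = 0\<^sub>v nc \<Longrightarrow> w = 0\<^sub>v nr"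
    and y: "y \<in> carrier_vec nr"
  shows "\<exists>z\<in>carrier_vec nc. B *\<^sub>v z = y"
proof -
  define C where "C = gauss_jordan_single B"
  note GJ = gauss_jordan_single[OF B C_def[symmetric]]
  obtain P Q where CPB: "C = P * B" and P: "P \<in> carrier_mat nr nr" and Q: "Q \<in> carrier_mat nr nr"
    and PQ: "P * Q = 1\<^sub>m nr" and QP: "Q * P = 1\<^sub>m nr"
    using GJ(4) by blast
  obtain f where pivot: "pivot_fun C f nc"
    using GJ(2,3) unfolding row_echelon_form_def by auto
  have no_zero_row: "row C i \<noteq> 0\<^sub>v nc" if i: "i < nr" for i
  proof
    assume "row C i = 0\<^sub>v nc"
    moreover have "row C i = transpose_mat B *\<^sub>v row P i"
    proof (rule eq_vecI)
      fix j assume "j < dim_vec (transpose_mat B *\<^sub>v row P i)"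
      then have j: "j < nc" using B by simp
      have "row P i \<bullet> col B j = col B j \<bullet> row P i"
        using P B i j by (intro comm_scalar_prod[of _ nr]) auto
      then show "row C i $ j = (transpose_mat B *\<^sub>v row P i) $ j"
        unfolding CPB using P B i j by simp
    qed (use CPB P B in simp)
    ultimately have "row P i = 0\<^sub>v nr" using inj P i by auto
    then have "(P * Q) $$ (i, i) = 0" using P Q i by (simp add: scalar_prod_def)
    with PQ i show False by simp
  qed
  obtain z where z: "z \<in> carrier_vec nc" and Cz: "C *\<^sub>v z = P *\<^sub>v y"
    using pivot_fun_mult_vec_surj[OF GJ(2) pivot no_zero_row mult_mat_vec_carrier[OF P y]] by blast
  have "B *\<^sub>v z = (Q * P * B) *\<^sub>v z" using QP B by simp
  also have "\<dots> = Q *\<^sub>v (C *\<^sub>v z)"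
    unfolding CPB using Q P B z by (metis assoc_mult_mat assoc_mult_mat_vec mult_carrier_mat)
  also have "\<dots> = y" using Cz P Q y QP by (metis assoc_mult_mat_vec one_mult_mat_vec)
  finally show ?thesis using z by (rule bexI)
qed

lemma vec_fract_clear_denominators:
  fixes v :: "'a::idom fract vec"
  assumes v: "v \<in> carrier_vec n"
  shows "\<exists>m w. m \<noteq> 0 \<and> w \<in> carrier_vec n \<and> to_fract m \<cdot>\<^sub>v v = map_vec to_fract w"
proof -
  have "\<forall>i. \<exists>a b. v $ i = Fract a b \<and> b \<noteq> 0" by (metis Fract_cases)
  then obtain a b where v_Fract: "\<And>i. v $ i = Fract (a i) (b i)" and b: "\<And>i. b i \<noteq> 0"
    by metis
  define m where "m = (\<Prod>i<n. b i)"
  have m: "m \<noteq> 0" unfolding m_def using b by simp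
  have "\<exists>c. to_fract m * v $ i = to_fract c" if i: "i < n" for i
  proof -
    obtain c where "m = b i * c"
      unfolding m_def using i by (metis dvd_prodI finite_lessThan lessThan_iff dvdE)
    then have "to_fract m * v $ i = to_fract (a i * c)"
      unfolding v_Fract using b[of i] by (simp add: eq_fract to_fract_def)
    then show ?thesis ..
  qed
  then obtain c where c: "\<And>i. i < n \<Longrightarrow> to_fract m * v $ i = to_fract (c i)" by metis
  have "to_fract m \<cdot>\<^sub>v v = map_vec to_fract (vec n c)"
    using c v by (intro eq_vecI) auto
  then show ?thesis using m by (intro exI[of _ m] exI[of _ "vec n c"]) auto
qed

lemma map_mat_to_fract_mult_vec_inj:
  fixes A :: "'a::idom mat"
  assumes A: "A \<in> carrier_mat nr nc"
    and inj: "\<forall>v\<in>carrier_vec nc. A *\<^sub>v v = 0\<^sub>v nr \<longrightarrow> v = 0\<^sub>v nc"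
    and w: "w \<in> carrier_vec nc" and Aw: "map_mat to_fract A *\<^sub>v w = 0\<^sub>v nr"
  shows "w = 0\<^sub>v nc"
proof -
  interpret inj_comm_ring_hom "to_fract :: 'a \<Rightarrow> 'a fract" by unfold_locales auto
  obtain m v where m: "m \<noteq> 0" and v: "v \<in> carrier_vec nc"
    and mv: "to_fract m \<cdot>\<^sub>v w = map_vec to_fract v"
    using vec_fract_clear_denominators[OF w] by blast
  have "map_vec to_fract (A *\<^sub>v v) = map_mat to_fract A *\<^sub>v (to_fract m \<cdot>\<^sub>v w)"
    using mult_mat_vec_hom[OF A v] mv by simp
  also have "\<dots> = to_fract m \<cdot>\<^sub>v (map_mat to_fract A *\<^sub>v w)"
    using A w by (simp add: mult_mat_vec)
  also have "\<dots> = map_vec to_fract (0\<^sub>v nr)" unfolding Aw by auto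
  finally have "v = 0\<^sub>v nc" using inj v by (auto dest: vec_hom_inj)
  show ?thesis
  proof (rule eq_vecI)
    fix i assume i: "i < dim_vec (0\<^sub>v nc :: 'a fract vec)"
    then have "to_fract m * w $ i = 0"
      using arg_cong[OF mv, of "\<lambda>x. x $ i"] \<open>v = 0\<^sub>v nc\<close> w by simp
    then show "w $ i = 0\<^sub>v nc $ i" using m i by simp
  qed (use w in simp)
qed

lemma transpose_mult_vec_surj_up_to_scalar:
  fixes A :: "'a::idom mat"
  assumes A: "A \<in> carrier_mat nr nc"
    and inj: "\<forall>v\<in>carrier_vec nc. A *\<^sub>v v = 0\<^sub>v nr \<longrightarrow> v = 0\<^sub>v nc"
    and y: "y \<in> carrier_vec nc"
  shows "\<exists>u. u \<noteq> 0 \<and> (\<exists>z\<in>carrier_vec nr. transpose_mat A *\<^sub>v z = u \<cdot>\<^sub>v y)"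
proof -
  interpret inj_comm_ring_hom "to_fract :: 'a \<Rightarrow> 'a fract" by unfold_locales auto
  let ?B = "transpose_mat (map_mat to_fract A)"
  have "w = 0\<^sub>v nc" if "w \<in> carrier_vec nc" "transpose_mat ?B *\<^sub>v w = 0\<^sub>v nr" for w
    using map_mat_to_fract_mult_vec_inj[OF A inj] that by simp
  then have "\<exists>z\<in>carrier_vec nr. ?B *\<^sub>v z = map_vec to_fract y"
    using A y by (intro mult_vec_surj_of_transpose_inj) auto
  then obtain z where z: "z \<in> carrier_vec nr" and Bz: "?B *\<^sub>v z = map_vec to_fract y" ..
  obtain m w where m: "m \<noteq> 0" and w: "w \<in> carrier_vec nr"
    and mz: "to_fract m \<cdot>\<^sub>v z = map_vec to_fract w"
    using vec_fract_clear_denominators[OF z] by blast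
  have "map_vec to_fract (transpose_mat A *\<^sub>v w) = ?B *\<^sub>v (to_fract m \<cdot>\<^sub>v z)"
    using mult_mat_vec_hom[of "transpose_mat A" nc nr w] A w by (simp add: map_mat_transpose mz)
  also have "\<dots> = to_fract m \<cdot>\<^sub>v (?B *\<^sub>v z)" using A z by (simp add: mult_mat_vec)
  also have "\<dots> = map_vec to_fract (m \<cdot>\<^sub>v y)" by (simp add: Bz vec_hom_smult)
  finally have "transpose_mat A *\<^sub>v w = m \<cdot>\<^sub>v y" by (rule vec_hom_inj)
  then show ?thesis using m w by blast
qed

section \<open>The generic point\<close>

lemma is_prime_ideal_zero: "is_prime_ideal {0::'a::idom}"
  unfolding is_prime_ideal_def is_ideal_def by auto

lemma not_in_supp_coker_zero_of_inj:
  fixes d4 :: "'a::idom mat"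
  assumes d4: "d4 \<in> carrier_mat nr m"
    and inj: "\<forall>v\<in>carrier_vec m. d4 *\<^sub>v v = 0\<^sub>v nr \<longrightarrow> v = 0\<^sub>v m"
  shows "not_in_supp_coker {0} m (transpose_mat d4)"
  unfolding not_in_supp_coker_def
  using transpose_mult_vec_surj_up_to_scalar[OF d4 inj] d4 by auto

lemma loc_annihilated_zero_iff:
  fixes d3 :: "'a::idom mat"
  shows "loc_annihilated {0} n d3 \<omega> \<longleftrightarrow>
    (\<forall>b\<in>carrier_vec (dim_col d3). clifford n (d3 *\<^sub>v b) \<omega> = (\<lambda>S. 0))"
  unfolding loc_annihilated_def ext_smult_def
  by (auto simp: fun_eq_iff intro: exI[of _ 1])

section \<open>The Clifford action and functionals on the even part\<close>

lemma wedge1_lincomb: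
  assumes "finite K" and f: "\<And>i. i < n \<Longrightarrow> f i = (\<Sum>k\<in>K. c k * g k i)"
  shows "wedge1 n f \<omega> S = (\<Sum>k\<in>K. c k * wedge1 n (g k) \<omega> S)"
proof (cases "S \<subseteq> {..<n}")
  case True
  have "wedge1 n f \<omega> S
      = (\<Sum>i\<in>S. \<Sum>k\<in>K. c k * ((-1) ^ card {j\<in>S. j < i} * g k i * \<omega> (S - {i})))"
    using True f unfolding wedge1_def
    by (auto simp: sum_distrib_left sum_distrib_right ac_simps intro!: sum.cong)
  also have "\<dots> = (\<Sum>k\<in>K. c k * wedge1 n (g k) \<omega> S)"
    using True unfolding wedge1_def by (subst sum.swap) (simp add: sum_distrib_left)
  finally show ?thesis .
qed (simp add: wedge1_def)

lemma contr_lincomb: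
  assumes "finite K" and f: "\<And>i. i < n \<Longrightarrow> f i = (\<Sum>k\<in>K. c k * g k i)"
  shows "contr n f \<omega> S = (\<Sum>k\<in>K. c k * contr n (g k) \<omega> S)"
proof (cases "S \<subseteq> {..<n}")
  case True
  have "contr n f \<omega> S
      = (\<Sum>i\<in>{..<n} - S. \<Sum>k\<in>K. c k * ((-1) ^ card {j\<in>S. j < i} * g k i * \<omega> (insert i S)))"
    using True f unfolding contr_def
    by (auto simp: sum_distrib_left sum_distrib_right ac_simps intro!: sum.cong)
  also have "\<dots> = (\<Sum>k\<in>K. c k * contr n (g k) \<omega> S)"
    using True unfolding contr_def by (subst sum.swap) (simp add: sum_distrib_left)
  finally show ?thesis .
qed (simp add: contr_def)

lemma sum_unit_vec_index:
  fixes x :: "'a::comm_ring_1 vec"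
  assumes "i < N"
  shows "(\<Sum>k<N. x $ k * unit_vec N k $ i) = x $ i"
proof -
  have "(\<Sum>k<N. x $ k * unit_vec N k $ i) = (\<Sum>k<N. if k = i then x $ k else 0)"
    using assms by (intro sum.cong) auto
  then show ?thesis using assms by simp
qed

lemma clifford_eq_sum_unit_vec:
  "clifford n x \<omega> S = (\<Sum>k<2*n. x $ k * clifford n (unit_vec (2*n) k) \<omega> S)"
proof -
  have "wedge1 n (\<lambda>i. x $ i) \<omega> S
      = (\<Sum>k<2*n. x $ k * wedge1 n (\<lambda>i. unit_vec (2*n) k $ i) \<omega> S)"
    by (rule wedge1_lincomb, simp, rule sum_unit_vec_index[symmetric], simp)
  moreover have "contr n (\<lambda>i. x $ (n+i)) \<omega> S
      = (\<Sum>k<2*n. x $ k * contr n (\<lambda>i. unit_vec (2*n) k $ (n+i)) \<omega> S)"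
    by (rule contr_lincomb, simp, rule sum_unit_vec_index[symmetric], simp)
  ultimately show ?thesis unfolding clifford_def by (simp add: sum.distrib distrib_left)
qed

lemma clifford_ext_odd:
  assumes s: "s \<in> ext_odd n"
  shows "clifford n x s \<in> ext_even n"
proof -
  have s_even: "s T = 0" if "even (card T)" for T using s that unfolding ext_odd_def by auto
  have "clifford n x s S = 0" if odd: "odd (card S)" and S: "S \<subseteq> {..<n}" for S
  proof -
    have fin: "finite S" using S finite_subset by blast
    have "even (card (S - {i}))" if "i \<in> S" for i
      using odd fin that by (simp add: card_Diff_singleton card_gt_0_iff odd_pos)
    moreover have "even (card (insert i S))" if "i \<notin> S" for i
      using odd fin that by simp
    ultimately show ?thesis
      using S unfolding clifford_def wedge1_def contr_def by (simp add: s_even)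
  qed
  then show ?thesis
    unfolding ext_even_def ext_def by (auto simp: clifford_def wedge1_def contr_def)
qed

lemma even_functional_zero:
  assumes "even_functional n lam"
  shows "lam (\<lambda>S. 0) = 0"
proof -
  have "(\<lambda>S. 0) \<in> ext_even n" unfolding ext_even_def ext_def by auto
  then have "lam (ext_smult 0 (\<lambda>S. 0)) = 0 * lam (\<lambda>S. 0)"
    using assms unfolding even_functional_def by blast
  then show ?thesis by (simp add: ext_smult_def)
qed

lemma ext_even_lincomb:
  fixes c :: "'b \<Rightarrow> 'a::comm_ring_1"
  assumes "\<And>k. k \<in> F \<Longrightarrow> \<omega> k \<in> ext_even n"
  shows "(\<lambda>S. \<Sum>k\<in>F. c k * \<omega> k S) \<in> ext_even n"
  using assms unfolding ext_even_def ext_def by (simp add: sum.neutral)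

lemma even_functional_lincomb:
  assumes lam: "even_functional n lam" and "finite F"
    and \<omega>: "\<And>k. k \<in> F \<Longrightarrow> \<omega> k \<in> ext_even n"
  shows "lam (\<lambda>S. \<Sum>k\<in>F. c k * \<omega> k S) = (\<Sum>k\<in>F. c k * lam (\<omega> k))"
  using \<open>finite F\<close> \<omega>
proof (induction F rule: finite_induct)
  case empty
  then show ?case using even_functional_zero[OF lam] by simp
next
  case (insert a F)
  have \<omega>a: "ext_smult (c a) (\<omega> a) \<in> ext_even n"
    using insert.prems unfolding ext_even_def ext_def ext_smult_def by auto
  have rest: "(\<lambda>S. \<Sum>k\<in>F. c k * \<omega> k S) \<in> ext_even n"
    using insert.prems by (intro ext_even_lincomb) auto
  have "lam (\<lambda>S. \<Sum>k\<in>insert a F. c k * \<omega> k S)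
      = lam (\<lambda>S. ext_smult (c a) (\<omega> a) S + (\<Sum>k\<in>F. c k * \<omega> k S))"
    using insert.hyps by (simp add: ext_smult_def)
  also have "\<dots> = lam (ext_smult (c a) (\<omega> a)) + lam (\<lambda>S. \<Sum>k\<in>F. c k * \<omega> k S)"
    using lam \<omega>a rest unfolding even_functional_def by simp
  also have "\<dots> = (\<Sum>k\<in>insert a F. c k * lam (\<omega> k))"
    using lam insert unfolding even_functional_def by auto
  finally show ?case .
qed

lemma even_functional_coeff_empty: "even_functional n (\<lambda>\<omega>. \<omega> {})"
  unfolding even_functional_def ext_smult_def by auto

section \<open>The hyperbolic form and the dual of phi\<close>

lemma beta_unit_vec_H:
  assumes "k < n"
  shows "beta n y (unit_vec (2*n) k) = y $ (n + k)"
proof -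
  have "beta n y (unit_vec (2*n) k) = (\<Sum>i<n. if i = k then y $ (n + i) else 0)"
    using assms unfolding beta_def by (intro sum.cong) (auto simp: unit_vec_def)
  then show ?thesis using assms by simp
qed

lemma beta_unit_vec_H_dual:
  assumes "k < n"
  shows "beta n y (unit_vec (2*n) (n + k)) = y $ k"
proof -
  have "beta n y (unit_vec (2*n) (n + k)) = (\<Sum>i<n. if i = k then y $ i else 0)"
    using assms unfolding beta_def by (intro sum.cong) (auto simp: unit_vec_def)
  then show ?thesis using assms by simp
qed

lemma sum_lessThan_double:
  fixes g :: "nat \<Rightarrow> 'a::comm_monoid_add"
  shows "(\<Sum>k<2*n. g k) = (\<Sum>k<n. g k) + (\<Sum>k<n. g (n + k))"
proof -
  have "(\<Sum>k<n + m. g k) = (\<Sum>k<n. g k) + (\<Sum>k<m. g (n + k))" for m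
    by (induction m) (simp_all add: ac_simps)
  then show ?thesis by (simp add: mult_2)
qed

lemma beta_eq_sum_unit_vec: "beta n y x = (\<Sum>k<2*n. x $ k * beta n y (unit_vec (2*n) k))"
proof -
  have "(\<Sum>k<2*n. x $ k * beta n y (unit_vec (2*n) k))
      = (\<Sum>k<n. x $ k * y $ (n + k)) + (\<Sum>k<n. x $ (n + k) * y $ k)"
    unfolding sum_lessThan_double by (simp add: beta_unit_vec_H beta_unit_vec_H_dual)
  then show ?thesis unfolding beta_def by (simp add: sum.distrib ac_simps)
qed

lemma beta_unit_vec_eqI:
  assumes y: "y \<in> carrier_vec (2*n)" and y': "y' \<in> carrier_vec (2*n)"
    and eq: "\<And>k. k < 2*n \<Longrightarrow> beta n y (unit_vec (2*n) k) = beta n y' (unit_vec (2*n) k)"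
  shows "y = y'"
proof (rule eq_vecI)
  fix i assume "i < dim_vec y'"
  then have i: "i < 2*n" using y' by simp
  show "y $ i = y' $ i"
  proof (cases "i < n")
    case True
    then show ?thesis using eq[of "n + i"] by (simp add: beta_unit_vec_H_dual)
  next
    case False
    define k where "k = i - n"
    have k: "i = n + k" "k < n" using False i unfolding k_def by auto
    show ?thesis using eq[of k] k by (simp add: beta_unit_vec_H)
  qed
qed (use y y' in simp)

lemma phi_dual_eqI:
  assumes y: "y \<in> carrier_vec (2*n)"
    and dual: "\<And>x. x \<in> carrier_vec (2*n) \<Longrightarrow> beta n y x = lam (clifford n x s)"
  shows "phi_dual n s lam = y"
  unfolding phi_dual_def
proof (rule the_equality)
  fix y' assume "y' \<in> carrier_vec (2*n) \<and> (\<forall>x\<in>carrier_vec (2*n). beta n y' x = lam (clifford n x s))"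
  then show "y' = y" using y dual by (intro beta_unit_vec_eqI) auto
qed (use y dual in auto)

lemma phi_dual:
  assumes lam: "even_functional n lam" and s: "s \<in> ext_odd n"
  shows "phi_dual n s lam \<in> carrier_vec (2*n)"
    and "x \<in> carrier_vec (2*n) \<Longrightarrow> beta n (phi_dual n s lam) x = lam (clifford n x s)"
proof -
  define \<mu> where "\<mu> k = lam (clifford n (unit_vec (2*n) k) s)" for k
  \<comment> \<open>beta pairs coordinate i with coordinate n + i, so y is read off from lam on unit vectors\<close>
  define y where "y = vec (2*n) (\<lambda>i. if i < n then \<mu> (n + i) else \<mu> (i - n))"
  have y: "y \<in> carrier_vec (2*n)" unfolding y_def by simp
  have y_unit: "beta n y (unit_vec (2*n) k) = \<mu> k" if "k < 2*n" for k
  proof (cases "k < n")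
    case True
    then have "beta n y (unit_vec (2*n) k) = y $ (n + k)" by (rule beta_unit_vec_H)
    also have "\<dots> = \<mu> k" using True by (simp add: y_def)
    finally show ?thesis .
  next
    case False
    define i where "i = k - n"
    have i: "k = n + i" "i < n" using False that unfolding i_def by auto
    have "beta n y (unit_vec (2*n) k) = y $ i"
      unfolding i(1) by (rule beta_unit_vec_H_dual[OF i(2)])
    also have "\<dots> = \<mu> k" using i by (simp add: y_def)
    finally show ?thesis .
  qed
  have "beta n y x = lam (clifford n x s)" for x
  proof -
    have x_lincomb: "(\<lambda>S. \<Sum>k<2*n. x $ k * clifford n (unit_vec (2*n) k) s S) = clifford n x s"
      by (rule ext) (rule clifford_eq_sum_unit_vec[symmetric])
    have "beta n y x = (\<Sum>k<2*n. x $ k * \<mu> k)"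
      by (subst beta_eq_sum_unit_vec) (simp add: y_unit)
    also have "\<dots> = lam (\<lambda>S. \<Sum>k<2*n. x $ k * clifford n (unit_vec (2*n) k) s S)"
      unfolding \<mu>_def
      by (rule even_functional_lincomb[symmetric, OF lam]) (auto intro: clifford_ext_odd[OF s])
    also have "\<dots> = lam (clifford n x s)" by (simp only: x_lincomb)
    finally show ?thesis .
  qed
  then have "phi_dual n s lam = y" using y by (intro phi_dual_eqI)
  then show "phi_dual n s lam \<in> carrier_vec (2*n)"
    and "x \<in> carrier_vec (2*n) \<Longrightarrow> beta n (phi_dual n s lam) x = lam (clifford n x s)"
    using y \<open>\<And>x. beta n y x = lam (clifford n x s)\<close> by auto
qed

lemma phi_dual_coeff_empty:
  "phi_dual n s (\<lambda>\<omega>. \<omega> {}) = vec (2*n) (\<lambda>i. if i < n then s {i} else 0)"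
proof (rule phi_dual_eqI)
  fix x :: "'a vec"
  have "beta n (vec (2*n) (\<lambda>i. if i < n then s {i} else 0)) x = (\<Sum>i<n. x $ (n + i) * s {i})"
    unfolding beta_def by (intro sum.cong) auto
  also have "\<dots> = clifford n x s {}"
    unfolding clifford_def wedge1_def contr_def by simp
  finally show "beta n (vec (2*n) (\<lambda>i. if i < n then s {i} else 0)) x = clifford n x s {}" .
qed simp

lemma Jmat_mult_vec_index:
  assumes y: "y \<in> carrier_vec (2*n)" and i: "i < 2*n"
  shows "(Jmat n *\<^sub>v y) $ i = (if i < n then y $ (n + i) else y $ (i - n))"
proof -
  define t where "t = (if i < n then n + i else i - n)"
  have "(Jmat n *\<^sub>v y) $ i = (\<Sum>j<2*n. (if j = i + n \<or> i = j + n then 1 else 0) * y $ j)"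
    using i y unfolding Jmat_def by (auto simp: scalar_prod_def lessThan_atLeast0 intro!: sum.cong)
  also have "\<dots> = (\<Sum>j<2*n. if j = t then y $ j else 0)"
    using i unfolding t_def by (intro sum.cong) auto
  also have "\<dots> = y $ t" using i unfolding t_def by auto
  finally show ?thesis by (simp add: t_def)
qed

lemma transpose_mult_vec_index:
  fixes d :: "'a::comm_ring_1 mat"
  assumes "d \<in> carrier_mat N m" and "z \<in> carrier_vec N" and "k < m"
  shows "(transpose_mat d *\<^sub>v z) $ k = (\<Sum>i<N. d $$ (i, k) * z $ i)"
  using assms by (auto simp: scalar_prod_def lessThan_atLeast0 intro!: sum.cong)

lemma transpose_mult_Jmat_mult_vec_index:
  fixes d :: "'a::comm_ring_1 mat"
  assumes d: "d \<in> carrier_mat (2*n) m" and y: "y \<in> carrier_vec (2*n)" and k: "k < m"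
  shows "((transpose_mat d * Jmat n) *\<^sub>v y) $ k = beta n y (d *\<^sub>v unit_vec m k)"
proof -
  have J: "Jmat n \<in> carrier_mat (2*n) (2*n)" unfolding Jmat_def by simp
  have "((transpose_mat d * Jmat n) *\<^sub>v y) $ k = (transpose_mat d *\<^sub>v (Jmat n *\<^sub>v y)) $ k"
    using d J y by (metis assoc_mult_mat_vec transpose_carrier_mat)
  also have "(transpose_mat d *\<^sub>v (Jmat n *\<^sub>v y)) $ k = (\<Sum>i<2*n. d $$ (i, k) * (Jmat n *\<^sub>v y) $ i)"
    by (rule transpose_mult_vec_index[OF d mult_mat_vec_carrier[OF J y] k])
  also have "\<dots> = (\<Sum>i<2*n. d $$ (i, k) * (if i < n then y $ (n + i) else y $ (i - n)))"
    using Jmat_mult_vec_index[OF y] by simp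
  also have "\<dots> = (\<Sum>i<n. d $$ (i, k) * y $ (n + i)) + (\<Sum>i<n. d $$ (n + i, k) * y $ i)"
    by (simp add: sum_lessThan_double)
  also have "\<dots> = beta n y (d *\<^sub>v unit_vec m k)"
    unfolding beta_def using d k by (auto simp: sum.distrib ac_simps intro!: sum.cong)
  finally show ?thesis .
qed

lemma phi_dual_in_image:
  fixes d :: "'a::comm_ring_1 mat"
  assumes d: "d \<in> carrier_mat (2*n) m"
    and exact: "exact_at (2*n) (transpose_mat d * Jmat n) d"
    and annihilates: "\<And>b. b \<in> carrier_vec m \<Longrightarrow> clifford n (d *\<^sub>v b) s = (\<lambda>S. 0)"
    and lam: "even_functional n lam" and s: "s \<in> ext_odd n"
  shows "\<exists>b\<in>carrier_vec m. d *\<^sub>v b = phi_dual n s lam"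
proof -
  let ?y = "phi_dual n s lam"
  have y: "?y \<in> carrier_vec (2*n)" by (rule phi_dual(1)[OF lam s])
  have "((transpose_mat d * Jmat n) *\<^sub>v ?y) $ k = 0" if k: "k < m" for k
  proof -
    have "((transpose_mat d * Jmat n) *\<^sub>v ?y) $ k = lam (clifford n (d *\<^sub>v unit_vec m k) s)"
      using transpose_mult_Jmat_mult_vec_index[OF d y k] phi_dual(2)[OF lam s] d by simp
    then show ?thesis using annihilates[of "unit_vec m k"] even_functional_zero[OF lam] by simp
  qed
  then have "(transpose_mat d * Jmat n) *\<^sub>v ?y = 0\<^sub>v (dim_row (transpose_mat d * Jmat n))"
    using d by (intro eq_vecI) auto
  then show ?thesis using exact y d unfolding exact_at_def by auto
qed

theorem mainTheorem7:
  fixes p q :: nat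
    and d1 d2 d3 d4 :: "'a::{factorial_semiring, idom} mat"
    and s :: "nat set \<Rightarrow> 'a"
  assumes noeth: "noetherian_ring TYPE('a)"
    and half: "is_unit (2::'a)"
    and p: "p \<ge> 1" and q: "q \<ge> 3"
    and d4: "d4 \<in> carrier_mat (p + q) (q - 2)"
    and d3: "d3 \<in> carrier_mat (2 * (p + 2)) (p + q)"
    and d2: "d2 = transpose_mat d3 * Jmat (p + 2)"
    and d1: "d1 = transpose_mat d4"
    and cx43: "d3 * d4 = 0\<^sub>m (2 * (p + 2)) (q - 2)"
    and cx32: "d2 * d3 = 0\<^sub>m (p + q) (p + q)"
    and cx21: "d1 * d2 = 0\<^sub>m (q - 2) (2 * (p + 2))"
    and inj4: "\<forall>v\<in>carrier_vec (q - 2). d4 *\<^sub>v v = 0\<^sub>v (p + q) \<longrightarrow> v = 0\<^sub>v (q - 2)"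
    and ex3: "exact_at (p + q) d3 d4"
    and ex2: "exact_at (2 * (p + 2)) d2 d3"
    and ex1: "exact_at (p + q) d1 d2"
    and s_odd: "s \<in> ext_odd (p + 2)"
    and s_gen: "\<forall>P. is_prime_ideal P \<longrightarrow> not_in_supp_coker P (q - 2) d1 \<longrightarrow>
                  loc_generates_annihilator P (p + 2) d3 s"
  shows "(\<forall>lam. even_functional (p + 2) lam \<longrightarrow>
            (\<exists>b\<in>carrier_vec (p + q). d3 *\<^sub>v b = phi_dual (p + 2) s lam))
       \<and> (\<exists>u\<in>carrier_vec (p + q).
            d3 *\<^sub>v u = vec (2 * (p + 2)) (\<lambda>i. if i < p + 2 then s {i} else 0))"
proof -
  have "loc_annihilated {0} (p + 2) d3 s"
    using s_gen is_prime_ideal_zero not_in_supp_coker_zero_of_inj[OF d4 inj4]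
    unfolding d1 loc_generates_annihilator_def by blast
  then have annihilates: "\<And>b. b \<in> carrier_vec (p + q) \<Longrightarrow> clifford (p + 2) (d3 *\<^sub>v b) s = (\<lambda>S. 0)"
    using d3 by (simp add: loc_annihilated_zero_iff)
  have image: "\<exists>b\<in>carrier_vec (p + q). d3 *\<^sub>v b = phi_dual (p + 2) s lam"
    if "even_functional (p + 2) lam" for lam
    using phi_dual_in_image[OF d3 ex2[unfolded d2] annihilates that s_odd] .
  show ?thesis
    using image image[OF even_functional_coeff_empty] by (simp add: phi_dual_coeff_empty)
qed

end
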